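(* Let $\mathbb P$ be an LTF and $n<\omega$. Then: (i) if $T\in\mathbf{LT}$ and $s_0\in 2^n$, then $T(\to s_0)\in\mathbb P$ iff $T\in\mathbf{LC}_n(\mathbb P)$; (ii) if $P\in\mathbf{LC}_n(\mathbb P)$, $s_0\in 2^n$, $S\in\mathbb P$ and $S\subseteq P(\to s_0)$, then there is $Q\in\mathbf{LC}_n(\mathbb P)$ with $Q\subseteq_n P$ and $Q(\to s_0)=S$; (iii) if $P\in\mathbf{LC}_n(\mathbb P)$ and $D\subseteq\mathbb P$ is open dense in $\mathbb P$, then there is $Q\in\mathbf{LC}_n(\mathbb P)$ with $Q\subseteq_n P$ and $Q(\to s)\in D$ for all $s\in 2^n$; (iv) if $P\in\mathbf{LC}_n(\mathbb P)$, $S,T\in\mathbb P$, $s,t\in 2^n$, $S\subseteq P(\to s^\frown 0)$, $T\subseteq P(\to t^\frown 1)$, $\sigma\in 2^{<\omega}$ and $T=\sigma\cdot S$, then there is $Q\in\mathbf{LC}_{n+1}(\mathbb P)$ with $Q\subseteq_{n+1}P$, $Q(\to s^\frown0)\subseteq S$ and $Q(\to t^\frown1)\subseteq T$.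
   Context: Notation. $2^{<\omega}$ is the set of finite binary strings, $\Lambda$ the empty string, $\mathrm{lh}(s)$ the length of $s$, $2^n$ the set of strings of length $n$, $s\subseteq t$ means $t$ extends $s$, $s^\frown t$ concatenation. For strings $s,t$ with $\mathrm{lh}(s)\le\mathrm{lh}(t)$, $s\cdot t$ is the string of length $\mathrm{lh}(t)$ with $(s\cdot t)(k)=t(k)+s(k)\bmod 2$ for $k<\mathrm{lh}(s)$ and $(s\cdot t)(k)=t(k)$ otherwise; if $\mathrm{lh}(s)>\mathrm{lh}(t)$ then $s\cdot t=(s\restriction\mathrm{lh}(t))\cdot t$. For $T\subseteq 2^{<\omega}$, $s\cdot T=\{s\cdot t:t\in T\}$. For a tree $T$ and $s\in T$, $T\upharpoonright s=\{t\in T:s\subseteq t\lor t\subseteq s\}$. A perfect tree is a nonempty tree $T\subseteq 2^{<\omega}$ with no endpoints and no isolated branches; its stem $\mathrm{stem}(T)$ is the largest $s\in T$ with $T=T\upharpoonright s$. A perfect tree $T$ is large, written $T\in\mathbf{LT}$, if there are nonempty strings $q^i_n$ ($n<\omega$, $i=0,1$) with $\mathrm{lh}(q^0_n)=\mathrm{lh}(q^1_n)\ge1$ and $q^i_n(0)=i$, such that $T$ consists exactly of all initial segments of strings $r^\frown q^{i(0)}_0{}^\frown\cdots{}^\frown q^{i(n)}_n$, where $r=\mathrm{stem}(T)$, $n<\omega$, $i(0),\dots,i(n)\in\{0,1\}$. Its splitting levels are $\mathrm{spl}_0(T)=\mathrm{lh}(r)$, $\mathrm{spl}_{n+1}(T)=\mathrm{spl}_n(T)+\mathrm{lh}(q^0_n)$.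 For $T\in\mathbf{LT}$ and $i\in\{0,1\}$, $T(\to i)=T\upharpoonright(\mathrm{stem}(T)^\frown i)$; for $s\in 2^n$ with $n\ge1$, $T(\to s)=(\cdots((T(\to s(0)))(\to s(1)))\cdots)(\to s(n-1))$, and $T(\to\Lambda)=T$. For $S,T\in\mathbf{LT}$ and $n<\omega$, $S\subseteq_n T$ means $S\subseteq T$ and $\mathrm{spl}_k(S)=\mathrm{spl}_k(T)$ for all $k<n$. A large-tree forcing notion (LTF) is a set $\mathbb P\subseteq\mathbf{LT}$ such that $T\upharpoonright u\in\mathbb P$ whenever $u\in T\in\mathbb P$, and $s\cdot T\in\mathbb P$ whenever $T\in\mathbb P$ and $s\in 2^{<\omega}$; it is ordered by inclusion (smaller trees are stronger conditions). A tree $T\in\mathbf{LT}$ is an $n$-collage over $\mathbb P$ if $T(\to s)\in\mathbb P$ for all $s\in 2^n$; $\mathbf{LC}_n(\mathbb P)$ denotes the set of such trees. *)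

theory Defs
  imports Main "HOL-Library.Sublist"
begin

text \<open>Finite binary strings are modelled as bool lists (False = 0, True = 1);
  s \<subseteq> t is prefix s t, concatenation is @.\<close>

definition smul :: "bool list \<Rightarrow> bool list \<Rightarrow> bool list" where
  "smul s t = map (\<lambda>k. if k < length s then (s ! k \<noteq> t ! k) else t ! k) [0..<length t]"

definition smul_set :: "bool list \<Rightarrow> bool list set \<Rightarrow> bool list set" where
  "smul_set s T = smul s ` T"

definition is_tree :: "bool list set \<Rightarrow> bool" where
  "is_tree T \<longleftrightarrow> T \<noteq> {} \<and> (\<forall>t\<in>T. \<forall>u. prefix u t \<longrightarrow> u \<in> T)"

definition perfect_tree :: "bool list set \<Rightarrow> bool" where
  "perfect_tree T \<longleftrightarrow> is_tree T
     \<and> (\<forall>t\<in>T. \<exists>b. t @ [b] \<in> T)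
     \<and> (\<forall>t\<in>T. \<exists>u. prefix t u \<and> u @ [False] \<in> T \<and> u @ [True] \<in> T)"

definition restr :: "bool list set \<Rightarrow> bool list \<Rightarrow> bool list set" where
  "restr T s = {t \<in> T. prefix s t \<or> prefix t s}"

definition stem :: "bool list set \<Rightarrow> bool list" where
  "stem T = (THE s. s \<in> T \<and> T = restr T s \<and>
                    (\<forall>u. u \<in> T \<and> T = restr T u \<longrightarrow> prefix u s))"

text \<open>q n i plays the role of q^i_n.\<close>
definition LT_rep :: "bool list set \<Rightarrow> (nat \<Rightarrow> bool \<Rightarrow> bool list) \<Rightarrow> bool" where
  "LT_rep T q \<longleftrightarrow>
     (\<forall>n. length (q n False) = length (q n True) \<and> 1 \<le> length (q n False)
          \<and> hd (q n False) = False \<and> hd (q n True) = True)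
     \<and> T = {u. \<exists>n (i :: nat \<Rightarrow> bool).
                prefix u (stem T @ concat (map (\<lambda>k. q k (i k)) [0..<Suc n]))}"

definition LT :: "bool list set set" where
  "LT = {T. perfect_tree T \<and> (\<exists>q. LT_rep T q)}"

definition spl :: "bool list set \<Rightarrow> nat \<Rightarrow> nat" where
  "spl T k = (THE m. \<exists>q. LT_rep T q \<and>
                 m = length (stem T) + (\<Sum>j<k. length (q j False)))"

definition goto1 :: "bool list set \<Rightarrow> bool \<Rightarrow> bool list set" where
  "goto1 T i = restr T (stem T @ [i])"

definition goto :: "bool list set \<Rightarrow> bool list \<Rightarrow> bool list set" where
  "goto T s = fold (\<lambda>b S. goto1 S b) s T"

definition subn :: "bool list set \<Rightarrow> nat \<Rightarrow> bool list set \<Rightarrow> bool" where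
  "subn S n T \<longleftrightarrow> S \<subseteq> T \<and> (\<forall>k<n. spl S k = spl T k)"

definition LTF :: "bool list set set \<Rightarrow> bool" where
  "LTF P \<longleftrightarrow> P \<subseteq> LT
     \<and> (\<forall>T\<in>P. \<forall>u\<in>T. restr T u \<in> P)
     \<and> (\<forall>T\<in>P. \<forall>s. smul_set s T \<in> P)"

definition LC :: "nat \<Rightarrow> bool list set set \<Rightarrow> bool list set set" where
  "LC n P = {T \<in> LT. \<forall>s. length s = n \<longrightarrow> goto T s \<in> P}"

definition open_dense :: "bool list set set \<Rightarrow> bool list set set \<Rightarrow> bool" where
  "open_dense P D \<longleftrightarrow> D \<subseteq> P
     \<and> (\<forall>S\<in>D. \<forall>T\<in>P. T \<subseteq> S \<longrightarrow> T \<in> D)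
     \<and> (\<forall>S\<in>P. \<exists>T\<in>D. T \<subseteq> S)"

end

theory Submission
  imports Defs
begin

text \<open>A large tree is given by its stem \<open>r\<close> and its blocks \<open>q\<close>, and \<open>T(\<rightarrow>s)\<close> is again
  large: its stem is \<open>r\<close> followed by the blocks chosen by \<open>s\<close>, its blocks are the remaining
  ones. Hence \<open>T(\<rightarrow>s)\<close> and \<open>T(\<rightarrow>s')\<close> are translates of each other when \<open>s\<close> and \<open>s'\<close>
  have the same length, and (i) follows from closure of an LTF under translation. For (ii)
  and (iv) one grafts: keep the blocks of \<open>P\<close> below the last level, lengthen the blocks of
  the last level so that the subtrees start at the stem of \<open>S\<close> (resp. of \<open>S\<close> and \<open>\<sigma>\<cdot>S\<close>),
  and continue with the blocks of \<open>S\<close>. Each subtree at that level is then a translate of \<open>S\<close>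
  lying inside the corresponding translate of \<open>P(\<rightarrow>s\<^sub>0)\<close>, so the grafted tree is a
  collage below \<open>P\<close> with the same splitting levels. (iii) applies (ii) once for each of the
  finitely many \<open>s \<in> 2\<^sup>n\<close>; in (iv), \<open>S\<close> is first shrunk so that its stem is at least as
  long as \<open>\<sigma>\<close>, which makes \<open>\<sigma>\<cdot>S\<close> a large tree with the same blocks as \<open>S\<close>.\<close>

definition valid_blocks :: "(nat \<Rightarrow> bool \<Rightarrow> bool list) \<Rightarrow> bool" where
  "valid_blocks q \<longleftrightarrow> (\<forall>n. length (q n False) = length (q n True) \<and> 1 \<le> length (q n False)
     \<and> hd (q n False) = False \<and> hd (q n True) = True)"

fun blocks :: "(nat \<Rightarrow> bool \<Rightarrow> bool list) \<Rightarrow> bool list \<Rightarrow> bool list" where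
  "blocks q [] = []"
| "blocks q (b # s) = q 0 b @ blocks (\<lambda>j. q (Suc j)) s"

definition shift_blocks :: "nat \<Rightarrow> (nat \<Rightarrow> bool \<Rightarrow> bool list) \<Rightarrow> nat \<Rightarrow> bool \<Rightarrow> bool list" where
  "shift_blocks k q = (\<lambda>j. q (j + k))"

definition large_tree :: "bool list \<Rightarrow> (nat \<Rightarrow> bool \<Rightarrow> bool list) \<Rightarrow> bool list set" where
  "large_tree r q = {u. \<exists>s. prefix u (r @ blocks q s)}"

lemma valid_blocksI:
  assumes "\<And>n b. \<exists>w. q n b = b # w" and "\<And>n. length (q n False) = length (q n True)"
  shows "valid_blocks q"
  unfolding valid_blocks_def
proof
  fix n
  obtain w0 w1 where "q n False = False # w0" "q n True = True # w1" using assms(1) by meson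
  then show "length (q n False) = length (q n True) \<and> 1 \<le> length (q n False)
     \<and> hd (q n False) = False \<and> hd (q n True) = True" using assms(2)[of n] by simp
qed

lemma valid_blocks_Cons: "valid_blocks q \<Longrightarrow> \<exists>w. q n b = b # w"
  unfolding valid_blocks_def by (cases b; cases "q n b") (auto dest: spec[of _ n])

lemma valid_blocks_length: "valid_blocks q \<Longrightarrow> length (q n b) = length (q n c)"
  unfolding valid_blocks_def by (cases b; cases c) (auto dest: spec[of _ n])

lemma valid_blocks_shift: "valid_blocks q \<Longrightarrow> valid_blocks (shift_blocks k q)"
  unfolding valid_blocks_def shift_blocks_def by blast

lemma valid_blocks_Suc: "valid_blocks q \<Longrightarrow> valid_blocks (\<lambda>j. q (Suc j))"
  unfolding valid_blocks_def by blast

lemma shift_blocks_0 [simp]: "shift_blocks 0 q = q"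
  unfolding shift_blocks_def by simp

lemma shift_blocks_Suc: "shift_blocks k (\<lambda>j. q (Suc j)) = shift_blocks (Suc k) q"
  unfolding shift_blocks_def by simp

lemma blocks_append: "blocks q (s @ z) = blocks q s @ blocks (shift_blocks (length s) q) z"
  by (induction s arbitrary: q) (simp_all add: shift_blocks_Suc)

lemma blocks_snoc: "blocks q (s @ [b]) = blocks q s @ q (length s) b"
  by (simp add: blocks_append shift_blocks_def)

lemma blocks_cong: "(\<And>k. k < length s \<Longrightarrow> q k = q' k) \<Longrightarrow> blocks q s = blocks q' s"
proof (induction s arbitrary: q q')
  case (Cons b s)
  have "blocks (\<lambda>j. q (Suc j)) s = blocks (\<lambda>j. q' (Suc j)) s"
    by (rule Cons.IH) (simp add: Cons.prems)
  then show ?case using Cons.prems[of 0] by simp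
qed simp

lemma length_blocks_eq:
  "valid_blocks q \<Longrightarrow> length s = length s' \<Longrightarrow> length (blocks q s) = length (blocks q s')"
proof (induction s arbitrary: s' q)
  case (Cons b s)
  then obtain c s'' where s': "s' = c # s''" by (cases s') auto
  have "length (blocks (\<lambda>j. q (Suc j)) s) = length (blocks (\<lambda>j. q (Suc j)) s'')"
    using Cons.IH[OF valid_blocks_Suc[OF Cons.prems(1)], of s''] Cons.prems(2) s' by simp
  then show ?case using s' valid_blocks_length[OF Cons.prems(1), of 0 b c] by simp
qed simp

lemma length_le_length_blocks: "valid_blocks q \<Longrightarrow> length s \<le> length (blocks q s)"
proof (induction s arbitrary: q)
  case (Cons b s)
  obtain w where "q 0 b = b # w" using valid_blocks_Cons[OF Cons.prems] by blast
  with Cons.IH[OF valid_blocks_Suc[OF Cons.prems]] show ?case by simp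
qed simp

lemma concat_map_eq_blocks: "concat (map (\<lambda>k. q k (i k)) [0..<n]) = blocks q (map i [0..<n])"
  by (induction n) (auto simp: blocks_snoc)

lemma large_tree_eq_LT_rep_set:
  "{u. \<exists>n (i :: nat \<Rightarrow> bool). prefix u (r @ concat (map (\<lambda>k. q k (i k)) [0..<Suc n]))}
   = large_tree r q"
proof (intro set_eqI iffI)
  fix u assume "u \<in> {u. \<exists>n (i :: nat \<Rightarrow> bool). prefix u (r @ concat (map (\<lambda>k. q k (i k)) [0..<Suc n]))}"
  then obtain n i where "prefix u (r @ concat (map (\<lambda>k. q k (i k)) [0..<Suc n]))" by blast
  then show "u \<in> large_tree r q"
    unfolding large_tree_def concat_map_eq_blocks by blast
next
  fix u assume "u \<in> large_tree r q"
  then obtain s where s: "prefix u (r @ blocks q s)" unfolding large_tree_def by blast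
  define i where "i k = (if k < length s then s ! k else False)" for k
  have "map i [0..<Suc (length s)] = s @ [False]"
    by (rule nth_equalityI) (auto simp: i_def nth_append)
  then have "r @ concat (map (\<lambda>k. q k (i k)) [0..<Suc (length s)]) = (r @ blocks q s) @ q (length s) False"
    unfolding concat_map_eq_blocks by (simp add: blocks_snoc)
  then have "prefix u (r @ concat (map (\<lambda>k. q k (i k)) [0..<Suc (length s)]))"
    using s by (metis prefix_append)
  then show "u \<in> {u. \<exists>n (i :: nat \<Rightarrow> bool). prefix u (r @ concat (map (\<lambda>k. q k (i k)) [0..<Suc n]))}"
    by blast
qed

lemma LT_rep_iff: "LT_rep T q \<longleftrightarrow> valid_blocks q \<and> T = large_tree (stem T) q"
  unfolding LT_rep_def valid_blocks_def large_tree_eq_LT_rep_set by blast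

lemma large_tree_prefix_closed: "u \<in> large_tree r q \<Longrightarrow> prefix v u \<Longrightarrow> v \<in> large_tree r q"
  unfolding large_tree_def using prefix_order.trans by blast

lemma blocks_in_large_tree: "r @ blocks q s \<in> large_tree r q"
  unfolding large_tree_def by auto

lemma stem_in_large_tree: "r \<in> large_tree r q"
  using blocks_in_large_tree[of r q "[]"] by simp

lemma child_in_large_tree: "valid_blocks q \<Longrightarrow> r @ [b] \<in> large_tree r q"
  using valid_blocks_Cons[of q 0 b] blocks_in_large_tree[of r q "[b]"]
  by (auto intro: large_tree_prefix_closed)

lemma large_tree_comparable: "u \<in> large_tree r q \<Longrightarrow> prefix u r \<or> prefix r u"
  unfolding large_tree_def using prefix_same_cases prefixI by blast

lemma stem_large_tree: "valid_blocks q \<Longrightarrow> stem (large_tree r q) = r"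
proof -
  assume v: "valid_blocks q"
  let ?T = "large_tree r q"
  have restr_r: "?T = restr ?T r"
    unfolding restr_def using large_tree_comparable by blast
  have below_r: "prefix u r" if "u \<in> ?T" "?T = restr ?T u" for u
  proof (rule ccontr)
    assume "\<not> prefix u r"
    with that(1) obtain c z where "u = r @ c # z"
      by (metis large_tree_comparable append_Nil2 neq_Nil_conv prefixE prefix_order.refl)
    moreover have "r @ [\<not> c] \<in> restr ?T u" using that(2) child_in_large_tree[OF v] by blast
    ultimately show False unfolding restr_def by auto
  qed
  show ?thesis unfolding stem_def
    by (rule the_equality) (use stem_in_large_tree restr_r below_r prefix_order.antisym in blast)+
qed

lemma perfect_tree_large_tree: "valid_blocks q \<Longrightarrow> perfect_tree (large_tree r q)"
  unfolding perfect_tree_def is_tree_def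
proof (intro conjI ballI allI impI)
  assume v: "valid_blocks q"
  show "large_tree r q \<noteq> {}" using stem_in_large_tree by blast
  show "\<And>t u. t \<in> large_tree r q \<Longrightarrow> prefix u t \<Longrightarrow> u \<in> large_tree r q"
    using large_tree_prefix_closed by blast
  fix t assume "t \<in> large_tree r q"
  then obtain s where s: "prefix t (r @ blocks q s)" unfolding large_tree_def by blast
  have split: "r @ blocks q s @ [b] \<in> large_tree r q" for b
    using valid_blocks_Cons[OF v, of "length s" b] blocks_in_large_tree[of r q "s @ [b]"]
    by (auto simp: blocks_snoc intro: large_tree_prefix_closed)
  show "\<exists>u. prefix t u \<and> u @ [False] \<in> large_tree r q \<and> u @ [True] \<in> large_tree r q"
    using s split by auto
  show "\<exists>b. t @ [b] \<in> large_tree r q"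
  proof (cases "t = r @ blocks q s")
    case True then show ?thesis using split by auto
  next
    case False
    with s obtain c z where "r @ blocks q s = t @ c # z"
      by (metis prefixE append_Nil2 neq_Nil_conv)
    then show ?thesis using blocks_in_large_tree[of r q s]
      by (metis large_tree_prefix_closed prefixI append_Cons append_Nil append_assoc)
  qed
qed

lemma large_tree_in_LT: "valid_blocks q \<Longrightarrow> large_tree r q \<in> LT"
  unfolding LT_def using perfect_tree_large_tree LT_rep_iff stem_large_tree by fastforce

lemma LT_E:
  assumes "T \<in> LT"
  obtains r q where "valid_blocks q" "T = large_tree r q"
  using assms unfolding LT_def LT_rep_iff by blast

lemma goto_Nil [simp]: "goto T [] = T"
  by (simp add: goto_def)

lemma goto_Cons: "goto T (b # s) = goto (goto1 T b) s"
  by (simp add: goto_def)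

lemma goto_subset: "goto T s \<subseteq> T"
proof (induction s arbitrary: T)
  case (Cons b s)
  have "goto1 T b \<subseteq> T" unfolding goto1_def restr_def by auto
  then show ?case using Cons.IH[of "goto1 T b"] by (simp add: goto_Cons)
qed simp

lemma goto1_large_tree:
  assumes "valid_blocks q"
  shows "goto1 (large_tree r q) b = large_tree (r @ q 0 b) (\<lambda>j. q (Suc j))"
proof -
  obtain w where w: "q 0 b = b # w" using valid_blocks_Cons[OF assms] by blast
  have "u \<in> large_tree (r @ q 0 b) (\<lambda>j. q (Suc j))"
    if "u \<in> large_tree r q" "prefix (r @ [b]) u \<or> prefix u (r @ [b])" for u
  proof (cases "prefix u r")
    case True
    then show ?thesis using stem_in_large_tree large_tree_prefix_closed prefix_append by blast
  next
    case False
    with that(2) obtain z where uz: "u = r @ b # z"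
      by (metis prefix_snoc prefixE append_Cons append_Nil append_assoc)
    from that(1) obtain s where s: "prefix u (r @ blocks q s)" unfolding large_tree_def by blast
    with uz obtain c s' where s': "s = c # s'" by (cases s) auto
    obtain w' where "q 0 c = c # w'" using valid_blocks_Cons[OF assms] by blast
    with s uz s' have "c = b" by simp
    with s s' show ?thesis unfolding large_tree_def by auto
  qed
  moreover have "u \<in> large_tree r q \<and> (prefix (r @ [b]) u \<or> prefix u (r @ [b]))"
    if "u \<in> large_tree (r @ q 0 b) (\<lambda>j. q (Suc j))" for u
  proof -
    from that obtain s where s: "prefix u (r @ q 0 b @ blocks (\<lambda>j. q (Suc j)) s)"
      unfolding large_tree_def by auto
    then have "prefix u (r @ blocks q (b # s))" by simp
    moreover have "prefix (r @ [b]) (r @ q 0 b @ blocks (\<lambda>j. q (Suc j)) s)" using w by simp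
    ultimately show ?thesis using s prefix_same_cases unfolding large_tree_def by blast
  qed
  ultimately show ?thesis
    unfolding goto1_def stem_large_tree[OF assms] restr_def by blast
qed

lemma goto_large_tree:
  "valid_blocks q \<Longrightarrow> goto (large_tree r q) s = large_tree (r @ blocks q s) (shift_blocks (length s) q)"
proof (induction s arbitrary: r q)
  case (Cons b s)
  then show ?case
    by (simp add: goto_Cons goto1_large_tree valid_blocks_Suc shift_blocks_Suc)
qed simp

lemma large_tree_eq_imp_first_blocks_eq:
  assumes "valid_blocks q1" "valid_blocks q2" "large_tree r q1 = large_tree r q2"
  shows "q1 0 b = q2 0 b"
    and "large_tree (r @ q1 0 b) (\<lambda>j. q1 (Suc j)) = large_tree (r @ q1 0 b) (\<lambda>j. q2 (Suc j))"
proof -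
  have tails: "large_tree (r @ q1 0 b) (\<lambda>j. q1 (Suc j)) = large_tree (r @ q2 0 b) (\<lambda>j. q2 (Suc j))"
    using goto1_large_tree[OF assms(1), of r b] goto1_large_tree[OF assms(2), of r b] assms(3) by simp
  from arg_cong[OF this, of stem] show "q1 0 b = q2 0 b"
    by (simp add: stem_large_tree valid_blocks_Suc assms(1,2))
  with tails show "large_tree (r @ q1 0 b) (\<lambda>j. q1 (Suc j)) = large_tree (r @ q1 0 b) (\<lambda>j. q2 (Suc j))"
    by simp
qed

lemma large_tree_blocks_unique:
  assumes "valid_blocks q1" "valid_blocks q2" "large_tree r q1 = large_tree r q2"
  shows "q1 = q2"
proof
  fix k
  show "q1 k = q2 k"
    using assms
  proof (induction k arbitrary: r q1 q2)
    case 0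
    then show ?case using large_tree_eq_imp_first_blocks_eq(1) by blast
  next
    case (Suc k)
    then show ?case
      using Suc.IH[OF valid_blocks_Suc[OF Suc.prems(1)] valid_blocks_Suc[OF Suc.prems(2)]]
        large_tree_eq_imp_first_blocks_eq(2)[OF Suc.prems, of False] by simp
  qed
qed

lemma spl_large_tree:
  assumes "valid_blocks q"
  shows "spl (large_tree r q) k = length r + (\<Sum>j<k. length (q j False))"
  unfolding spl_def
proof (rule the_equality)
  show "\<exists>q'. LT_rep (large_tree r q) q' \<and>
    length r + (\<Sum>j<k. length (q j False)) = length (stem (large_tree r q)) + (\<Sum>j<k. length (q' j False))"
    using assms LT_rep_iff stem_large_tree by metis
  fix m assume "\<exists>q'. LT_rep (large_tree r q) q' \<and>
    m = length (stem (large_tree r q)) + (\<Sum>j<k. length (q' j False))"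
  then obtain q' where "valid_blocks q'" "large_tree r q = large_tree r q'"
    and m: "m = length r + (\<Sum>j<k. length (q' j False))"
    unfolding LT_rep_iff stem_large_tree[OF assms] by blast
  then have "q' = q" using large_tree_blocks_unique assms by metis
  then show "m = length r + (\<Sum>j<k. length (q j False))" using m by simp
qed

lemma length_smul [simp]: "length (smul x t) = length t"
  unfolding smul_def by simp

lemma nth_smul: "k < length t \<Longrightarrow> smul x t ! k = (if k < length x then x ! k \<noteq> t ! k else t ! k)"
  unfolding smul_def by simp

lemma smul_append: "length x \<le> length r \<Longrightarrow> smul x (r @ w) = smul x r @ w"
  by (rule nth_equalityI) (auto simp: nth_smul nth_append)

lemma smul_smul [simp]: "smul x (smul x u) = u"
  by (rule nth_equalityI) (auto simp: nth_smul)

lemma smul_smul_same_length: "length a = length b \<Longrightarrow> smul (smul a b) b = a"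
  by (rule nth_equalityI) (auto simp: nth_smul)

lemma prefix_smul: "prefix u v \<Longrightarrow> prefix (smul x u) (smul x v)"
proof -
  assume "prefix u v"
  then have "u = take (length u) v" by (metis append_eq_conv_conj prefixE)
  moreover have "smul x (take n v) = take n (smul x v)" for n
    by (rule nth_equalityI) (auto simp: nth_smul)
  ultimately show ?thesis by (metis take_is_prefix)
qed

lemma smul_set_mono: "A \<subseteq> B \<Longrightarrow> smul_set x A \<subseteq> smul_set x B"
  unfolding smul_set_def by auto

lemma smul_set_large_tree:
  assumes "length x \<le> length r"
  shows "smul_set x (large_tree r q) = large_tree (smul x r) q"
proof -
  have "smul x u \<in> large_tree (smul x r) q" if "u \<in> large_tree r q" for u
  proof -
    from that obtain s where "prefix u (r @ blocks q s)" unfolding large_tree_def by blast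
    then have "prefix (smul x u) (smul x r @ blocks q s)"
      using prefix_smul smul_append[OF assms] by metis
    then show ?thesis unfolding large_tree_def by blast
  qed
  moreover have "smul x u \<in> large_tree r q" if "u \<in> large_tree (smul x r) q" for u
  proof -
    from that obtain s where "prefix u (smul x (r @ blocks q s))"
      unfolding large_tree_def smul_append[OF assms] by blast
    then have "prefix (smul x u) (r @ blocks q s)" using prefix_smul smul_smul by metis
    then show ?thesis unfolding large_tree_def by blast
  qed
  ultimately show ?thesis
    unfolding smul_set_def by (auto intro: image_eqI[where x = "smul x u" for u])
qed

lemma smul_set_large_tree_append:
  assumes "length a = length b"
  shows "smul_set (smul a b) (large_tree (b @ w) q) = large_tree (a @ w) q"
  using smul_set_large_tree[of "smul a b" "b @ w" q] smul_append[of "smul a b" b w] assms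
  by (simp add: smul_smul_same_length)

lemma goto_large_tree_translate:
  assumes "valid_blocks q" "length s = length s0"
  shows "goto (large_tree r q) s
    = smul_set (smul (r @ blocks q s) (r @ blocks q s0)) (goto (large_tree r q) s0)"
  using smul_set_large_tree_append[of "r @ blocks q s" "r @ blocks q s0" "[]"]
    length_blocks_eq[OF assms] assms(2)
  by (simp add: goto_large_tree[OF assms(1)])

lemma LTF_LT: "LTF P \<Longrightarrow> T \<in> P \<Longrightarrow> T \<in> LT"
  unfolding LTF_def by blast

lemma LTF_smul_set: "LTF P \<Longrightarrow> T \<in> P \<Longrightarrow> smul_set x T \<in> P"
  unfolding LTF_def by blast

lemma LTF_goto: "LTF P \<Longrightarrow> T \<in> P \<Longrightarrow> goto T s \<in> P"
proof (induction s arbitrary: T)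
  case (Cons b s)
  obtain r q where "valid_blocks q" "T = large_tree r q" using LT_E[OF LTF_LT[OF Cons.prems]] .
  then have "stem T @ [b] \<in> T" using child_in_large_tree stem_large_tree by metis
  then have "goto1 T b \<in> P" using Cons.prems unfolding LTF_def goto1_def by blast
  then show ?case using Cons.IH Cons.prems(1) by (simp add: goto_Cons)
qed simp

lemma large_tree_cover:
  assumes "valid_blocks q" "u \<in> large_tree r q"
  shows "\<exists>s. length s = N \<and> u \<in> goto (large_tree r q) s"
proof -
  obtain s where s: "prefix u (r @ blocks q s)" using assms(2) unfolding large_tree_def by blast
  define s' where "s' = s @ replicate (N - length s) False"
  have N: "N \<le> length s'" unfolding s'_def by simp
  have "prefix u (r @ blocks q s')" using s unfolding s'_def blocks_append
    by (metis append.assoc prefix_append)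
  then have "prefix u ((r @ blocks q (take N s')) @ blocks (shift_blocks N q) (drop N s'))"
    using blocks_append[of q "take N s'" "drop N s'"] N by simp
  moreover have "goto (large_tree r q) (take N s') = large_tree (r @ blocks q (take N s')) (shift_blocks N q)"
    using goto_large_tree[OF assms(1)] N by simp
  ultimately have "u \<in> goto (large_tree r q) (take N s')"
    unfolding large_tree_def by auto
  then show ?thesis using N by (intro exI[of _ "take N s'"]) simp
qed

lemma LT_subset_by_goto:
  assumes "T \<in> LT" "\<And>s. length s = N \<Longrightarrow> goto T s \<subseteq> goto T' s"
  shows "T \<subseteq> T'"
proof
  fix u assume "u \<in> T"
  with assms(1) obtain s where "length s = N" "u \<in> goto T s"
    by (metis LT_E large_tree_cover)
  then show "u \<in> T'" using assms(2) goto_subset by blast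
qed

lemma large_tree_subset_imp_prefix:
  assumes "valid_blocks q'" "large_tree r' q' \<subseteq> large_tree p q"
  shows "prefix p r'"
proof (rule ccontr)
  assume np: "\<not> prefix p r'"
  have children: "r' @ [b] \<in> large_tree p q" for b using child_in_large_tree[OF assms(1)] assms(2) by blast
  then have "prefix r' p" using np large_tree_comparable
    by (metis prefix_order.trans prefix_append prefix_order.refl)
  with np obtain d z where "p = r' @ d # z" by (metis append_Nil2 prefixE neq_Nil_conv)
  moreover have "prefix (r' @ [\<not> d]) p \<or> prefix p (r' @ [\<not> d])"
    using large_tree_comparable children by blast
  ultimately show False by auto
qed

definition graft_blocks ::
  "nat \<Rightarrow> (nat \<Rightarrow> bool \<Rightarrow> bool list) \<Rightarrow> (bool \<Rightarrow> bool list) \<Rightarrow> (nat \<Rightarrow> bool \<Rightarrow> bool list)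
    \<Rightarrow> nat \<Rightarrow> bool \<Rightarrow> bool list" where
  "graft_blocks n q z q' =
     (\<lambda>k. if k < n then q k else if k = n then (\<lambda>b. q n b @ z b) else q' (k - Suc n))"

lemma valid_graft_blocks:
  assumes "valid_blocks q" "valid_blocks q'" "length (z False) = length (z True)"
  shows "valid_blocks (graft_blocks n q z q')"
proof (rule valid_blocksI)
  show "\<exists>w. graft_blocks n q z q' k b = b # w" for k b
    using valid_blocks_Cons[OF assms(1), of k b] valid_blocks_Cons[OF assms(1), of n b]
      valid_blocks_Cons[OF assms(2), of "k - Suc n" b]
    unfolding graft_blocks_def by auto
  show "length (graft_blocks n q z q' k False) = length (graft_blocks n q z q' k True)" for k
    using valid_blocks_length[OF assms(1)] valid_blocks_length[OF assms(2)] assms(3)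
    unfolding graft_blocks_def by auto
qed

lemma goto_large_tree_graft:
  assumes "valid_blocks (graft_blocks n q z q')" "length u = n"
  shows "goto (large_tree r (graft_blocks n q z q')) (u @ [b]) = large_tree (r @ blocks q (u @ [b]) @ z b) q'"
proof -
  have "blocks (graft_blocks n q z q') u = blocks q u"
    by (rule blocks_cong) (simp add: graft_blocks_def assms(2))
  moreover have "shift_blocks (Suc n) (graft_blocks n q z q') = q'"
    by (simp add: shift_blocks_def graft_blocks_def)
  ultimately show ?thesis
    using assms by (simp add: goto_large_tree blocks_snoc graft_blocks_def)
qed

lemma goto_large_tree_graft_translate:
  assumes "valid_blocks q" "valid_blocks (graft_blocks n q z q')" "length u = n" "length v = Suc n"
  shows "goto (large_tree r (graft_blocks n q z q')) (u @ [b])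
    = smul_set (smul (r @ blocks q (u @ [b])) (r @ blocks q v)) (large_tree (r @ blocks q v @ z b) q')"
  using smul_set_large_tree_append[of "r @ blocks q (u @ [b])" "r @ blocks q v" "z b" q']
    length_blocks_eq[OF assms(1), of "u @ [b]" v] assms(3,4)
  by (simp add: goto_large_tree_graft[OF assms(2,3)])

lemma goto_large_tree_graft_subset:
  assumes "valid_blocks q" "valid_blocks (graft_blocks n q z q')" "length u = n" "length v = Suc n"
    and "large_tree (r @ blocks q v @ z b) q' \<subseteq> goto (large_tree r q) v"
  shows "goto (large_tree r (graft_blocks n q z q')) (u @ [b]) \<subseteq> goto (large_tree r q) (u @ [b])"
proof -
  have "goto (large_tree r q) (u @ [b])
    = smul_set (smul (r @ blocks q (u @ [b])) (r @ blocks q v)) (goto (large_tree r q) v)"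
    using goto_large_tree_translate[OF assms(1)] assms(3,4) by simp
  then show ?thesis
    using goto_large_tree_graft_translate[OF assms(1-4)] smul_set_mono[OF assms(5)] by simp
qed

lemma subn_large_tree_graft:
  assumes "valid_blocks q" "valid_blocks (graft_blocks n q z q')"
    and "\<And>u b. length u = n \<Longrightarrow>
      goto (large_tree r (graft_blocks n q z q')) (u @ [b]) \<subseteq> goto (large_tree r q) (u @ [b])"
  shows "subn (large_tree r (graft_blocks n q z q')) (Suc n) (large_tree r q)"
  unfolding subn_def
proof
  show "large_tree r (graft_blocks n q z q') \<subseteq> large_tree r q"
  proof (rule LT_subset_by_goto[OF large_tree_in_LT[OF assms(2)]])
    fix s :: "bool list" assume "length s = Suc n"
    then obtain u b where "s = u @ [b]" "length u = n" by (metis length_Suc_conv_rev)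
    then show "goto (large_tree r (graft_blocks n q z q')) s \<subseteq> goto (large_tree r q) s"
      using assms(3) by blast
  qed
  show "\<forall>k<Suc n. spl (large_tree r (graft_blocks n q z q')) k = spl (large_tree r q) k"
    unfolding spl_large_tree[OF assms(1)] spl_large_tree[OF assms(2)]
    by (auto simp: graft_blocks_def intro!: sum.cong)
qed

lemma LC_SucI:
  assumes "T \<in> LT" "\<And>u b. length u = n \<Longrightarrow> goto T (u @ [b]) \<in> P"
  shows "T \<in> LC (Suc n) P"
  unfolding LC_def using assms by (auto simp: length_Suc_conv_rev)

lemma goto_in_LTF_iff_LC:
  assumes "LTF P" "T \<in> LT" "length s0 = n"
  shows "goto T s0 \<in> P \<longleftrightarrow> T \<in> LC n P"
proof
  assume "goto T s0 \<in> P"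
  obtain r q where "valid_blocks q" "T = large_tree r q" using LT_E[OF assms(2)] .
  then have "goto T s \<in> P" if "length s = n" for s
    using goto_large_tree_translate[of q s s0 r] that assms(3)
      LTF_smul_set[OF assms(1) \<open>goto T s0 \<in> P\<close>] by metis
  then show "T \<in> LC n P" unfolding LC_def using assms(2) by blast
qed (use assms(3) in \<open>simp add: LC_def\<close>)

lemma LC_refine_goto:
  assumes "LTF P" "Pt \<in> LT" "length s0 = n" "S \<in> P" "S \<subseteq> goto Pt s0"
  shows "\<exists>Q \<in> LC n P. subn Q n Pt \<and> goto Q s0 = S \<and> (\<forall>s. length s = n \<longrightarrow> goto Q s \<subseteq> goto Pt s)"
proof (cases n)
  case 0
  then show ?thesis
    using assms LTF_LT[OF assms(1,4)] by (auto simp: LC_def subn_def intro!: bexI[of _ S])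
next
  case (Suc m)
  obtain r q where q: "valid_blocks q" and Pt: "Pt = large_tree r q" using LT_E[OF assms(2)] .
  obtain rS qS where qS: "valid_blocks qS" and S: "S = large_tree rS qS"
    using LT_E[OF LTF_LT[OF assms(1,4)]] .
  have "goto Pt s0 = large_tree (r @ blocks q s0) (shift_blocks n q)"
    using Pt goto_large_tree[OF q] assms(3) by simp
  then have "prefix (r @ blocks q s0) rS" using large_tree_subset_imp_prefix[OF qS] assms(5) S by metis
  then obtain w where S_w: "S = large_tree (r @ blocks q s0 @ w) qS" using S by (auto elim: prefixE)
  define Q where "Q = large_tree r (graft_blocks m q (\<lambda>_. w) qS)"
  have vQ: "valid_blocks (graft_blocks m q (\<lambda>_. w) qS)" by (rule valid_graft_blocks[OF q qS]) simp
  have goto_Q: "goto Q (u @ [b]) \<in> P" "goto Q (u @ [b]) \<subseteq> goto Pt (u @ [b])" if "length u = m" for u b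
    using goto_large_tree_graft_translate[OF q vQ that, of s0 r b]
      goto_large_tree_graft_subset[OF q vQ that, of s0 r b] LTF_smul_set[OF assms(1,4)]
      assms(3,5) Suc Pt S_w unfolding Q_def by auto
  have split: "\<exists>u b. s = u @ [b] \<and> length u = m" if "length s = n" for s :: "bool list"
    using that Suc by (metis length_Suc_conv_rev)
  have "Q \<in> LC n P"
    unfolding Q_def Suc by (rule LC_SucI[OF large_tree_in_LT[OF vQ]]) (use goto_Q(1) Q_def in blast)
  moreover have "subn Q n Pt"
    using subn_large_tree_graft[OF q vQ] goto_Q(2) unfolding Q_def Suc Pt by simp
  moreover have "goto Q s0 = S"
    using goto_large_tree_graft[OF vQ] split[OF assms(3)] S_w unfolding Q_def by auto
  ultimately show ?thesis using goto_Q(2) split by blast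
qed

lemma subn_trans: "subn S n T \<Longrightarrow> subn T n U \<Longrightarrow> subn S n U"
  unfolding subn_def by auto

lemma LC_refine_open_dense_on:
  assumes "LTF P" "Pt \<in> LC n P" "open_dense P D" "finite A" "\<forall>s\<in>A. length s = n"
  shows "\<exists>Q \<in> LC n P. subn Q n Pt \<and> (\<forall>s\<in>A. goto Q s \<in> D)"
  using assms(4,5)
proof (induction A rule: finite_induct)
  case empty
  show ?case using assms(2) by (auto simp: subn_def)
next
  case (insert s0 A)
  then obtain Q1 where Q1: "Q1 \<in> LC n P" "subn Q1 n Pt" "\<forall>s\<in>A. goto Q1 s \<in> D" by auto
  have s0: "length s0 = n" using insert.prems by simp
  then have "goto Q1 s0 \<in> P" using Q1(1) unfolding LC_def by blast
  then obtain S where S: "S \<in> D" "S \<subseteq> goto Q1 s0" using assms(3) unfolding open_dense_def by blast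
  have "S \<in> P" using S(1) assms(3) unfolding open_dense_def by blast
  then obtain Q2 where Q2: "Q2 \<in> LC n P" "subn Q2 n Q1" "goto Q2 s0 = S"
      "\<forall>s. length s = n \<longrightarrow> goto Q2 s \<subseteq> goto Q1 s"
    using LC_refine_goto[OF assms(1) _ s0 _ S(2)] Q1(1) unfolding LC_def by blast
  have "goto Q2 s \<in> D" if "s \<in> A" for s
  proof -
    have "length s = n" using that insert.prems by simp
    then have "goto Q2 s \<in> P" "goto Q2 s \<subseteq> goto Q1 s" using Q2(1,4) unfolding LC_def by auto
    then show ?thesis using Q1(3) that assms(3) unfolding open_dense_def by blast
  qed
  then show ?case using Q2 S(1) subn_trans[OF Q2(2) Q1(2)] by auto
qed

lemma LC_Suc_refine_pair_long_stem:
  assumes "LTF P" "Pt \<in> LT" "S \<in> P" "length \<sigma> \<le> length (stem S)" "length s = n" "length t = n"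
    and "S \<subseteq> goto Pt (s @ [False])" "smul_set \<sigma> S \<subseteq> goto Pt (t @ [True])"
  shows "\<exists>Q \<in> LC (Suc n) P. subn Q (Suc n) Pt
    \<and> goto Q (s @ [False]) = S \<and> goto Q (t @ [True]) = smul_set \<sigma> S"
proof -
  obtain r q where q: "valid_blocks q" and Pt: "Pt = large_tree r q" using LT_E[OF assms(2)] .
  obtain rS qS where qS: "valid_blocks qS" and S: "S = large_tree rS qS"
    using LT_E[OF LTF_LT[OF assms(1,3)]] .
  have "length \<sigma> \<le> length rS" using assms(4) stem_large_tree[OF qS] S by simp
  define T where "T = smul_set \<sigma> S"
  have T: "T = large_tree (smul \<sigma> rS) qS"
    unfolding T_def S by (rule smul_set_large_tree) fact
  have goto_Pt: "goto Pt v = large_tree (r @ blocks q v) (shift_blocks (length v) q)" for v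
    using Pt goto_large_tree[OF q] by simp
  have "prefix (r @ blocks q (s @ [False])) rS"
    using large_tree_subset_imp_prefix[OF qS] assms(7) unfolding S goto_Pt by blast
  then obtain z0 where z0: "rS = r @ blocks q (s @ [False]) @ z0" by (auto elim: prefixE)
  have "prefix (r @ blocks q (t @ [True])) (smul \<sigma> rS)"
    using large_tree_subset_imp_prefix[OF qS] assms(8) unfolding T_def[symmetric] T goto_Pt by blast
  then obtain z1 where z1: "smul \<sigma> rS = r @ blocks q (t @ [True]) @ z1" by (auto elim: prefixE)
  have "length z0 = length z1"
    using arg_cong[OF z1, of length] z0 length_blocks_eq[OF q, of "s @ [False]" "t @ [True]"] assms(5,6)
    by simp
  define z where "z b = (if b then z1 else z0)" for b
  define Q where "Q = large_tree r (graft_blocks n q z qS)"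
  have vQ: "valid_blocks (graft_blocks n q z qS)"
    by (rule valid_graft_blocks[OF q qS]) (simp add: z_def \<open>length z0 = length z1\<close>)
  have S_z: "S = large_tree (r @ blocks q (s @ [False]) @ z False) qS"
    and T_z: "T = large_tree (r @ blocks q (t @ [True]) @ z True) qS"
    using S z0 T z1 by (simp_all add: z_def)
  have "T \<in> P" unfolding T_def using LTF_smul_set[OF assms(1,3)] .
  have lengths: "length (s @ [False]) = Suc n" "length (t @ [True]) = Suc n" using assms(5,6) by simp_all
  have goto_Q: "goto Q (u @ [b]) \<in> P \<and> goto Q (u @ [b]) \<subseteq> goto Pt (u @ [b])" if "length u = n" for u b
  proof (cases b)
    case False
    have "S \<subseteq> goto (large_tree r q) (s @ [False])" using assms(7) Pt by simp
    with False show ?thesis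
      using goto_large_tree_graft_translate[OF q vQ that lengths(1), of r b]
        goto_large_tree_graft_subset[OF q vQ that lengths(1), of r b]
        LTF_smul_set[OF assms(1,3)] Pt S_z unfolding Q_def by simp
  next
    case True
    have "T \<subseteq> goto (large_tree r q) (t @ [True])" using assms(8) Pt T_def by simp
    with True show ?thesis
      using goto_large_tree_graft_translate[OF q vQ that lengths(2), of r b]
        goto_large_tree_graft_subset[OF q vQ that lengths(2), of r b]
        LTF_smul_set[OF assms(1) \<open>T \<in> P\<close>] Pt T_z unfolding Q_def by simp
  qed
  have "Q \<in> LC (Suc n) P"
    unfolding Q_def by (rule LC_SucI[OF large_tree_in_LT[OF vQ]]) (use goto_Q Q_def in blast)
  moreover have "subn Q (Suc n) Pt"
    using subn_large_tree_graft[OF q vQ] goto_Q unfolding Q_def Pt by simp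
  moreover have "goto Q (s @ [False]) = S" "goto Q (t @ [True]) = T"
    using goto_large_tree_graft[OF vQ] assms(5,6) S_z T_z unfolding Q_def by auto
  ultimately show ?thesis unfolding T_def by blast
qed

lemma LC_Suc_refine_pair:
  assumes "LTF P" "Pt \<in> LT" "S \<in> P" "length s = n" "length t = n"
    and "S \<subseteq> goto Pt (s @ [False])" "smul_set \<sigma> S \<subseteq> goto Pt (t @ [True])"
  shows "\<exists>Q \<in> LC (Suc n) P. subn Q (Suc n) Pt
    \<and> goto Q (s @ [False]) \<subseteq> S \<and> goto Q (t @ [True]) \<subseteq> smul_set \<sigma> S"
proof -
  \<comment> \<open>Pass to a subtree whose stem is long enough for \<open>\<sigma>\<close> to act on the stem alone.\<close>
  define S' where "S' = goto S (replicate (length \<sigma>) False)"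
  obtain rS qS where qS: "valid_blocks qS" and S: "S = large_tree rS qS"
    using LT_E[OF LTF_LT[OF assms(1,3)]] .
  have "stem S' = rS @ blocks qS (replicate (length \<sigma>) False)"
    unfolding S'_def S goto_large_tree[OF qS] by (rule stem_large_tree[OF valid_blocks_shift[OF qS]])
  then have "length \<sigma> \<le> length (stem S')"
    using length_le_length_blocks[OF qS, of "replicate (length \<sigma>) False"] by simp
  moreover have "S' \<in> P" unfolding S'_def using LTF_goto[OF assms(1,3)] .
  moreover have "S' \<subseteq> S" unfolding S'_def by (rule goto_subset)
  moreover have "smul_set \<sigma> S' \<subseteq> smul_set \<sigma> S" using smul_set_mono[OF \<open>S' \<subseteq> S\<close>] .
  ultimately obtain Q where "Q \<in> LC (Suc n) P" "subn Q (Suc n) Pt"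
    "goto Q (s @ [False]) = S'" "goto Q (t @ [True]) = smul_set \<sigma> S'"
    using LC_Suc_refine_pair_long_stem[OF assms(1,2) \<open>S' \<in> P\<close> _ assms(4,5)] assms(6,7)
    by (meson order.trans)
  with \<open>S' \<subseteq> S\<close> \<open>smul_set \<sigma> S' \<subseteq> smul_set \<sigma> S\<close> show ?thesis by auto
qed

theorem lemma4p1:
  fixes P :: "bool list set set" and n :: nat
  assumes "LTF P"
  shows
  "(\<forall>T s0. T \<in> LT \<and> length s0 = n \<longrightarrow> (goto T s0 \<in> P \<longleftrightarrow> T \<in> LC n P))
   \<and> (\<forall>Pt s0 S. Pt \<in> LC n P \<and> length s0 = n \<and> S \<in> P \<and> S \<subseteq> goto Pt s0 \<longrightarrow>
        (\<exists>Q \<in> LC n P. subn Q n Pt \<and> goto Q s0 = S))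
   \<and> (\<forall>Pt D. Pt \<in> LC n P \<and> open_dense P D \<longrightarrow>
        (\<exists>Q \<in> LC n P. subn Q n Pt \<and> (\<forall>s. length s = n \<longrightarrow> goto Q s \<in> D)))
   \<and> (\<forall>Pt S T s t \<sigma>. Pt \<in> LC n P \<and> S \<in> P \<and> T \<in> P \<and> length s = n \<and> length t = n
        \<and> S \<subseteq> goto Pt (s @ [False]) \<and> T \<subseteq> goto Pt (t @ [True]) \<and> T = smul_set \<sigma> S \<longrightarrow>
        (\<exists>Q \<in> LC (Suc n) P. subn Q (Suc n) Pt
            \<and> goto Q (s @ [False]) \<subseteq> S \<and> goto Q (t @ [True]) \<subseteq> T))"
proof (intro conjI allI impI)
  fix T :: "bool list set" and s0 :: "bool list" assume "T \<in> LT \<and> length s0 = n"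
  then show "goto T s0 \<in> P \<longleftrightarrow> T \<in> LC n P" using goto_in_LTF_iff_LC[OF assms] by blast
next
  fix Pt S :: "bool list set" and s0 :: "bool list" assume "Pt \<in> LC n P \<and> length s0 = n \<and> S \<in> P \<and> S \<subseteq> goto Pt s0"
  then show "\<exists>Q \<in> LC n P. subn Q n Pt \<and> goto Q s0 = S"
    using LC_refine_goto[OF assms] unfolding LC_def by blast
next
  fix Pt :: "bool list set" and D assume "Pt \<in> LC n P \<and> open_dense P D"
  moreover have "finite {s :: bool list. length s = n}"
    using finite_lists_length_eq[of "UNIV :: bool set" n] by simp
  ultimately show "\<exists>Q \<in> LC n P. subn Q n Pt \<and> (\<forall>s. length s = n \<longrightarrow> goto Q s \<in> D)"
    using LC_refine_open_dense_on[OF assms, of Pt n D "{s. length s = n}"] by blast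
next
  fix Pt S T :: "bool list set" and s t \<sigma> :: "bool list"
  assume "Pt \<in> LC n P \<and> S \<in> P \<and> T \<in> P \<and> length s = n \<and> length t = n
    \<and> S \<subseteq> goto Pt (s @ [False]) \<and> T \<subseteq> goto Pt (t @ [True]) \<and> T = smul_set \<sigma> S"
  then show "\<exists>Q \<in> LC (Suc n) P. subn Q (Suc n) Pt \<and> goto Q (s @ [False]) \<subseteq> S \<and> goto Q (t @ [True]) \<subseteq> T"
    using LC_Suc_refine_pair[OF assms, of Pt S s n t \<sigma>] unfolding LC_def by blast
qed

end
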